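(* Let $\mathcal G=(V_{\min},V_{\max},E,w,\lambda)$ be a sharp discounted payoff game. If each offset factor $\alpha_e$ ($e\in E$) is drawn independently and uniformly at random from a bounded interval of positive numbers, then $\mathcal G$ is almost surely improving with respect to the adjusted objectives $f'_\sigma$ defined by the sampled factors $\{\alpha_e\mid e\in E\}$.
   Context: A discounted payoff game is a tuple $\mathcal G=(V_{\min},V_{\max},E,w,\lambda)$ with $V=V_{\min}\cup V_{\max}$ finite (disjoint union of Min and Max vertices), $E\subseteq V\times V$ with every vertex having an outgoing edge, $w:E\to\mathbb R$, $\lambda:E\to[0,1)$. A joint strategy is a map $\sigma:V\to V$ with $(v,\sigma(v))\in E$. $H$ is the system of inequations over $x\in\mathbb R^V$ containing, for each edge $e=(v,v')$, $x(v)\ge w_e+\lambda_e x(v')$ if $v\in V_{\max}$ and $x(v)\le w_e+\lambda_e x(v')$ if $v\in V_{\min}$. A basis of $H$ is a set of $|V|$ inequations of $H$ whose equality versions have a unique common solution; if it satisfies $H$ it is the basis valuation of that basis. The game is sharp if every basis valuation satisfies exactly $|V|$ inequations of $H$ with equality. $\mathsf{offset}(x,(v,v'))=x(v)-(w_{(v,v')}+\lambda_{(v,v')}x(v'))$ if $v\in V_{\max}$, and $(w_{(v,v')}+\lambda_{(v,v')}x(v'))-x(v)$ otherwise; with positive factors $\alpha_e$, $\mathsf{offset}'(x,e)=\alpha_e\,\mathsf{offset}(x,e)$ and $f'_\sigma(x)=\sum_{v\in V}\mathsf{offset}'(x,(v,\sigma(v)))$. A sharp game is improving (with respect to $f'$)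 if for every joint strategy $\sigma$ and every basis valuation $\nu$ not minimising $f'_\sigma$ over the solutions of $H$, there is a basis obtained from the basis of $\nu$ by exchanging exactly one inequation whose basis valuation $\nu'$ satisfies $f'_\sigma(\nu')<f'_\sigma(\nu)$. *)

theory Defs
  imports "HOL-Analysis.Analysis"
begin

text \<open>Discounted payoff games on a finite vertex type 'v (V = UNIV).
  Vmin, Vmax: Min and Max vertices; E: edges; w: weights; lam: discount factors.
  Inequations of H are indexed by edges.\<close>

definition ineq_holds ::
  "'v set \<Rightarrow> ('v \<times> 'v \<Rightarrow> real) \<Rightarrow> ('v \<times> 'v \<Rightarrow> real) \<Rightarrow> 'v \<times> 'v \<Rightarrow> ('v \<Rightarrow> real) \<Rightarrow> bool" where
  "ineq_holds Vmax w lam e x =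
     (if fst e \<in> Vmax then x (fst e) \<ge> w e + lam e * x (snd e)
      else x (fst e) \<le> w e + lam e * x (snd e))"

definition tight ::
  "('v \<times> 'v \<Rightarrow> real) \<Rightarrow> ('v \<times> 'v \<Rightarrow> real) \<Rightarrow> 'v \<times> 'v \<Rightarrow> ('v \<Rightarrow> real) \<Rightarrow> bool" where
  "tight w lam e x = (x (fst e) = w e + lam e * x (snd e))"

definition solves_H ::
  "'v set \<Rightarrow> ('v \<times> 'v) set \<Rightarrow> ('v \<times> 'v \<Rightarrow> real) \<Rightarrow> ('v \<times> 'v \<Rightarrow> real) \<Rightarrow> ('v \<Rightarrow> real) \<Rightarrow> bool" where
  "solves_H Vmax E w lam x = (\<forall>e\<in>E. ineq_holds Vmax w lam e x)"

definition is_basis ::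
  "('v::finite \<times> 'v) set \<Rightarrow> ('v \<times> 'v \<Rightarrow> real) \<Rightarrow> ('v \<times> 'v \<Rightarrow> real) \<Rightarrow> ('v \<times> 'v) set \<Rightarrow> bool" where
  "is_basis E w lam B =
     (B \<subseteq> E \<and> card B = CARD('v) \<and> (\<exists>!x. \<forall>e\<in>B. tight w lam e x))"

definition basis_sol ::
  "('v \<times> 'v \<Rightarrow> real) \<Rightarrow> ('v \<times> 'v \<Rightarrow> real) \<Rightarrow> ('v \<times> 'v) set \<Rightarrow> ('v \<Rightarrow> real)" where
  "basis_sol w lam B = (THE x. \<forall>e\<in>B. tight w lam e x)"

definition is_basis_valuation_of ::
  "'v set \<Rightarrow> ('v::finite \<times> 'v) set \<Rightarrow> ('v \<times> 'v \<Rightarrow> real) \<Rightarrow> ('v \<times> 'v \<Rightarrow> real)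
     \<Rightarrow> ('v \<times> 'v) set \<Rightarrow> ('v \<Rightarrow> real) \<Rightarrow> bool" where
  "is_basis_valuation_of Vmax E w lam B x =
     (is_basis E w lam B \<and> basis_sol w lam B = x \<and> solves_H Vmax E w lam x)"

definition sharp ::
  "'v set \<Rightarrow> ('v::finite \<times> 'v) set \<Rightarrow> ('v \<times> 'v \<Rightarrow> real) \<Rightarrow> ('v \<times> 'v \<Rightarrow> real) \<Rightarrow> bool" where
  "sharp Vmax E w lam =
     (\<forall>B x. is_basis_valuation_of Vmax E w lam B x \<longrightarrow>
        card {e \<in> E. tight w lam e x} = CARD('v))"

definition offset ::
  "'v set \<Rightarrow> ('v \<times> 'v \<Rightarrow> real) \<Rightarrow> ('v \<times> 'v \<Rightarrow> real) \<Rightarrow> ('v \<Rightarrow> real) \<Rightarrow> 'v \<times> 'v \<Rightarrow> real" where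
  "offset Vmax w lam x e =
     (if fst e \<in> Vmax then x (fst e) - (w e + lam e * x (snd e))
      else (w e + lam e * x (snd e)) - x (fst e))"

definition joint_strategy :: "('v \<times> 'v) set \<Rightarrow> ('v \<Rightarrow> 'v) \<Rightarrow> bool" where
  "joint_strategy E \<sigma> = (\<forall>v. (v, \<sigma> v) \<in> E)"

definition f_adj ::
  "'v set \<Rightarrow> ('v::finite \<times> 'v \<Rightarrow> real) \<Rightarrow> ('v \<times> 'v \<Rightarrow> real) \<Rightarrow> ('v \<times> 'v \<Rightarrow> real)
     \<Rightarrow> ('v \<Rightarrow> 'v) \<Rightarrow> ('v \<Rightarrow> real) \<Rightarrow> real" where
  "f_adj Vmax w lam \<alpha> \<sigma> x = (\<Sum>v\<in>UNIV. \<alpha> (v, \<sigma> v) * offset Vmax w lam x (v, \<sigma> v))"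

definition improving ::
  "'v set \<Rightarrow> ('v::finite \<times> 'v) set \<Rightarrow> ('v \<times> 'v \<Rightarrow> real) \<Rightarrow> ('v \<times> 'v \<Rightarrow> real)
     \<Rightarrow> ('v \<times> 'v \<Rightarrow> real) \<Rightarrow> bool" where
  "improving Vmax E w lam \<alpha> =
     (sharp Vmax E w lam \<and>
      (\<forall>\<sigma> B \<nu>. joint_strategy E \<sigma> \<longrightarrow> is_basis_valuation_of Vmax E w lam B \<nu> \<longrightarrow>
         (\<exists>x. solves_H Vmax E w lam x \<and> f_adj Vmax w lam \<alpha> \<sigma> x < f_adj Vmax w lam \<alpha> \<sigma> \<nu>) \<longrightarrow>
         (\<exists>e\<in>B. \<exists>e'\<in>E - B. \<exists>\<nu>'.
            is_basis_valuation_of Vmax E w lam (insert e' (B - {e})) \<nu>' \<and>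
            f_adj Vmax w lam \<alpha> \<sigma> \<nu>' < f_adj Vmax w lam \<alpha> \<sigma> \<nu>)))"

end

theory Submission
  imports Defs "HOL-Probability.Infinite_Product_Measure"
begin

text \<open>The sampled factors are almost surely positive, and for nonnegative factors \<open>f'\<^sub>\<sigma>\<close> is an
  affine function that is nonnegative on the polyhedron \<open>H\<close>. Sharpness says that every vertex
  of \<open>H\<close> is nondegenerate, so the simplex pivot applies: if a vertex \<open>\<nu>\<close> is not optimal, then
  some edge of the polyhedron leaving \<open>\<nu>\<close> descends. This edge cannot be an unbounded ray, since
  \<open>f'\<^sub>\<sigma>\<close> is bounded below on \<open>H\<close>, so it ends at an adjacent vertex, reached after a positive
  step by nondegeneracy, whose basis differs from that of \<open>\<nu>\<close> in exactly one inequation.\<close>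

definition offset_lin :: "'v set \<Rightarrow> ('v \<times> 'v \<Rightarrow> real) \<Rightarrow> 'v \<times> 'v \<Rightarrow> ('v \<Rightarrow> real) \<Rightarrow> real" where
  "offset_lin Vmax lam e z = (if fst e \<in> Vmax then 1 else -1) * (z (fst e) - lam e * z (snd e))"

definition f_adj_lin ::
  "'v set \<Rightarrow> ('v::finite \<times> 'v \<Rightarrow> real) \<Rightarrow> ('v \<times> 'v \<Rightarrow> real) \<Rightarrow> ('v \<Rightarrow> 'v) \<Rightarrow> ('v \<Rightarrow> real) \<Rightarrow> real"
where
  "f_adj_lin Vmax lam \<alpha> \<sigma> z = (\<Sum>v\<in>UNIV. \<alpha> (v, \<sigma> v) * offset_lin Vmax lam (v, \<sigma> v) z)"

definition edge_dir ::
  "'v set \<Rightarrow> ('v \<times> 'v \<Rightarrow> real) \<Rightarrow> ('v \<times> 'v) set \<Rightarrow> 'v \<times> 'v \<Rightarrow> 'v \<Rightarrow> real" where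
  "edge_dir Vmax lam B b = (SOME z. \<forall>c\<in>B. offset_lin Vmax lam c z = (if c = b then 1 else 0))"

lemma offset_add_scaled:
  "offset Vmax w lam (\<lambda>u. x u + t * z u) e = offset Vmax w lam x e + t * offset_lin Vmax lam e z"
  by (auto simp: offset_def offset_lin_def algebra_simps)

lemma offset_lin_scale:
  "offset_lin Vmax lam e (\<lambda>u. c * z u) = c * offset_lin Vmax lam e z"
  by (auto simp: offset_lin_def algebra_simps)

lemma offset_lin_sum:
  "offset_lin Vmax lam e (\<lambda>u. \<Sum>i\<in>I. c i * z i u) = (\<Sum>i\<in>I. c i * offset_lin Vmax lam e (z i))"
  by (auto simp: offset_lin_def algebra_simps sum_distrib_left sum_subtractf)

lemma offset_lin_diff_offset:
  "offset_lin Vmax lam e (\<lambda>u. x u - y u) = offset Vmax w lam x e - offset Vmax w lam y e"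
  by (auto simp: offset_def offset_lin_def algebra_simps)

lemma offset_lin_diff:
  "offset_lin Vmax lam e (\<lambda>u. x u - y u) = offset_lin Vmax lam e x - offset_lin Vmax lam e y"
  by (auto simp: offset_lin_def algebra_simps)

lemma ineq_holds_iff_offset_nonneg: "ineq_holds Vmax w lam e x \<longleftrightarrow> 0 \<le> offset Vmax w lam x e"
  by (auto simp: ineq_holds_def offset_def)

lemma tight_iff_offset_eq_0: "tight w lam e x \<longleftrightarrow> offset Vmax w lam x e = 0"
  by (auto simp: tight_def offset_def)

lemma solves_H_iff_offset_nonneg:
  "solves_H Vmax E w lam x \<longleftrightarrow> (\<forall>e\<in>E. 0 \<le> offset Vmax w lam x e)"
  by (simp add: solves_H_def ineq_holds_iff_offset_nonneg)

lemma f_adj_add_scaled: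
  "f_adj Vmax w lam \<alpha> \<sigma> (\<lambda>u. x u + t * z u) = f_adj Vmax w lam \<alpha> \<sigma> x + t * f_adj_lin Vmax lam \<alpha> \<sigma> z"
  by (simp add: f_adj_def f_adj_lin_def offset_add_scaled algebra_simps sum.distrib sum_distrib_left)

lemma f_adj_lin_sum:
  "f_adj_lin Vmax lam \<alpha> \<sigma> (\<lambda>u. \<Sum>i\<in>I. c i * z i u) = (\<Sum>i\<in>I. c i * f_adj_lin Vmax lam \<alpha> \<sigma> (z i))"
  unfolding f_adj_lin_def offset_lin_sum
  by (simp add: sum_distrib_left sum.swap[of _ UNIV] mult_ac)

lemma f_adj_nonneg:
  assumes "joint_strategy E \<sigma>" and "\<forall>e\<in>E. 0 \<le> \<alpha> e" and "solves_H Vmax E w lam x"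
  shows "0 \<le> f_adj Vmax w lam \<alpha> \<sigma> x"
  using assms unfolding f_adj_def joint_strategy_def solves_H_iff_offset_nonneg
  by (intro sum_nonneg mult_nonneg_nonneg) auto

lemma linear_functionals_surj:
  fixes \<phi> :: "'i \<Rightarrow> real^'n \<Rightarrow> real"
  assumes card: "card B = CARD('n)" and lin: "\<And>b. b \<in> B \<Longrightarrow> linear (\<phi> b)"
    and kernel: "\<And>z. \<forall>b\<in>B. \<phi> b z = 0 \<Longrightarrow> z = 0"
  shows "\<exists>z. \<forall>b\<in>B. \<phi> b z = c b"
proof -
  have "finite B"
    by (rule card_ge_0_finite) (simp add: card)
  then obtain h where h: "bij_betw h (UNIV :: 'n set) B"
    using card finite_same_card_bij[of "UNIV :: 'n set" B] by auto
  define L where "L z = (\<chi> u. \<phi> (h u) z)" for z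
  have "linear L"
    using lin h unfolding L_def linear_iff bij_betw_def
    by (auto simp: vec_eq_iff linear_add linear_scale)
  moreover have "inj L"
  proof (rule injI)
    fix z z' assume "L z = L z'"
    with lin h have "\<forall>b\<in>B. \<phi> b (z - z') = 0"
      by (auto simp: L_def vec_eq_iff bij_betw_def linear_diff)
    then show "z = z'"
      using kernel by fastforce
  qed
  ultimately obtain z where "L z = (\<chi> u. c (h u))"
    using linear_injective_imp_surjective by (metis surjD)
  then have "\<forall>u. \<phi> (h u) z = c (h u)"
    by (simp add: L_def vec_eq_iff)
  then show ?thesis
    using h by (metis bij_betw_iff_bijections)
qed

lemma basis_sol_tight:
  assumes "is_basis E w lam B" and "e \<in> B"
  shows "tight w lam e (basis_sol w lam B)"
  using assms theI'[of "\<lambda>x. \<forall>e\<in>B. tight w lam e x"]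
  by (simp add: is_basis_def basis_sol_def)

lemma basis_sol_unique:
  assumes "is_basis E w lam B" and "\<forall>e\<in>B. tight w lam e y"
  shows "y = basis_sol w lam B"
  using assms the1_equality[of "\<lambda>x. \<forall>e\<in>B. tight w lam e x" y]
  by (simp add: is_basis_def basis_sol_def)

lemma basis_kernel_trivial:
  assumes basis: "is_basis E w lam B" and z: "\<forall>b\<in>B. offset_lin Vmax lam b z = 0"
  shows "z = (\<lambda>_. 0)"
proof -
  let ?x = "basis_sol w lam B"
  have "tight w lam b (\<lambda>u. ?x u + z u)" if "b \<in> B" for b
    using basis_sol_tight[OF basis that] z that offset_add_scaled[of Vmax w lam ?x 1 z b]
    by (simp add: tight_iff_offset_eq_0[where Vmax = Vmax])
  then have "(\<lambda>u. ?x u + z u) = ?x"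
    using basis basis_sol_unique by blast
  then show ?thesis
    by (simp add: fun_eq_iff)
qed

lemma offset_lin_surj_on_basis:
  assumes "is_basis E w lam B"
  shows "\<exists>z. \<forall>b\<in>B. offset_lin Vmax lam b z = c b"
proof -
  have "\<exists>z. \<forall>b\<in>B. offset_lin Vmax lam b (vec_nth z) = c b"
  proof (rule linear_functionals_surj)
    show "card B = CARD('a)"
      using assms by (simp add: is_basis_def)
    show "linear (\<lambda>z. offset_lin Vmax lam b (vec_nth z))" for b
      unfolding linear_iff offset_lin_def by (auto simp: algebra_simps)
    show "z = 0" if "\<forall>b\<in>B. offset_lin Vmax lam b (vec_nth z) = 0" for z
      using basis_kernel_trivial[OF assms that] by (simp add: vec_eq_iff fun_eq_iff)
  qed
  then show ?thesis
    by blast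
qed

lemma offset_lin_edge_dir:
  assumes "is_basis E w lam B" and "c \<in> B"
  shows "offset_lin Vmax lam c (edge_dir Vmax lam B b) = (if c = b then 1 else 0)"
  using someI_ex[OF offset_lin_surj_on_basis[OF assms(1), of Vmax "\<lambda>c. if c = b then 1 else 0"]]
    assms(2)
  unfolding edge_dir_def by blast

lemma basis_decomp:
  assumes "is_basis E w lam B"
  shows "z = (\<lambda>i. \<Sum>b\<in>B. offset_lin Vmax lam b z * edge_dir Vmax lam B b i)"
proof -
  let ?s = "\<lambda>i. \<Sum>b\<in>B. offset_lin Vmax lam b z * edge_dir Vmax lam B b i"
  have "offset_lin Vmax lam c ?s = offset_lin Vmax lam c z" if "c \<in> B" for c
    using assms that by (simp add: offset_lin_sum offset_lin_edge_dir if_distrib cong: if_cong)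
  then have "\<forall>c\<in>B. offset_lin Vmax lam c (\<lambda>u. z u - ?s u) = 0"
    by (simp add: offset_lin_diff)
  from basis_kernel_trivial[OF assms this] show ?thesis
    by (simp add: fun_eq_iff)
qed

lemma sharp_slack_off_basis:
  assumes "sharp Vmax E w lam" and \<nu>: "is_basis_valuation_of Vmax E w lam B \<nu>" and e: "e \<in> E - B"
  shows "0 < offset Vmax w lam \<nu> e"
proof -
  have basis: "is_basis E w lam B" and feasible: "solves_H Vmax E w lam \<nu>"
    and "basis_sol w lam B = \<nu>"
    using \<nu> by (auto simp: is_basis_valuation_of_def)
  then have "B \<subseteq> {e \<in> E. tight w lam e \<nu>}"
    using basis_sol_tight[OF basis] by (auto simp: is_basis_def)
  moreover have "card {e \<in> E. tight w lam e \<nu>} = card B"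
    using assms(1) \<nu> basis by (simp add: sharp_def is_basis_def)
  ultimately have "{e \<in> E. tight w lam e \<nu>} = B"
    by (metis card_subset_eq finite)
  with e have "offset Vmax w lam \<nu> e \<noteq> 0"
    by (auto simp: tight_iff_offset_eq_0[where Vmax = Vmax])
  moreover have "0 \<le> offset Vmax w lam \<nu> e"
    using feasible e by (simp add: solves_H_iff_offset_nonneg)
  ultimately show ?thesis
    by simp
qed

lemma exists_descent_edge:
  assumes basis: "is_basis E w lam B" and tight: "\<forall>b\<in>B. tight w lam b \<nu>"
    and "solves_H Vmax E w lam x" and "f_adj Vmax w lam \<alpha> \<sigma> x < f_adj Vmax w lam \<alpha> \<sigma> \<nu>"
  shows "\<exists>b\<in>B. f_adj_lin Vmax lam \<alpha> \<sigma> (edge_dir Vmax lam B b) < 0"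
proof (rule ccontr)
  assume "\<not> ?thesis"
  then have edges_ascend: "0 \<le> f_adj_lin Vmax lam \<alpha> \<sigma> (edge_dir Vmax lam B b)" if "b \<in> B" for b
    using that by (simp add: not_less)
  define d where "d = (\<lambda>u. x u - \<nu> u)"
  have "0 \<le> offset_lin Vmax lam b d" if "b \<in> B" for b
  proof -
    have "offset Vmax w lam \<nu> b = 0"
      using tight that by (simp add: tight_iff_offset_eq_0[where Vmax = Vmax])
    moreover have "0 \<le> offset Vmax w lam x b"
      using assms(3) basis that by (auto simp: solves_H_iff_offset_nonneg is_basis_def)
    ultimately show ?thesis
      by (simp add: d_def offset_lin_diff_offset[where w = w])
  qed
  then have "0 \<le> (\<Sum>b\<in>B. offset_lin Vmax lam b d * f_adj_lin Vmax lam \<alpha> \<sigma> (edge_dir Vmax lam B b))"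
    using edges_ascend by (simp add: sum_nonneg)
  also have "\<dots> = f_adj_lin Vmax lam \<alpha> \<sigma> d"
    by (subst (2) basis_decomp[OF basis, of d]) (rule f_adj_lin_sum[symmetric])
  also have "\<dots> = f_adj Vmax w lam \<alpha> \<sigma> x - f_adj Vmax w lam \<alpha> \<sigma> \<nu>"
    using f_adj_add_scaled[of Vmax w lam \<alpha> \<sigma> \<nu> 1 d] by (simp add: d_def)
  finally show False
    using assms(4) by simp
qed

text \<open>A descent direction cannot be a feasible ray: \<open>f'\<^sub>\<sigma>\<close> is bounded below on \<open>H\<close>.\<close>

lemma descent_direction_blocked:
  assumes "joint_strategy E \<sigma>" and "\<forall>e\<in>E. 0 \<le> \<alpha> e" and \<nu>: "solves_H Vmax E w lam \<nu>"
    and descent: "f_adj_lin Vmax lam \<alpha> \<sigma> d < 0"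
  shows "\<exists>e\<in>E. offset_lin Vmax lam e d < 0"
proof (rule ccontr)
  assume "\<not> ?thesis"
  define t where "t = (f_adj Vmax w lam \<alpha> \<sigma> \<nu> + 1) / - f_adj_lin Vmax lam \<alpha> \<sigma> d"
  have "0 \<le> t"
    using f_adj_nonneg[OF assms(1-3)] descent by (simp add: t_def divide_nonneg_neg)
  with \<nu> \<open>\<not> ?thesis\<close> have "solves_H Vmax E w lam (\<lambda>u. \<nu> u + t * d u)"
    by (simp add: solves_H_iff_offset_nonneg offset_add_scaled not_less)
  from f_adj_nonneg[OF assms(1,2) this]
  have "0 \<le> f_adj Vmax w lam \<alpha> \<sigma> \<nu> + t * f_adj_lin Vmax lam \<alpha> \<sigma> d"
    by (simp add: f_adj_add_scaled)
  also have "\<dots> = -1"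
    using descent by (simp add: t_def)
  finally show False
    by simp
qed

lemma ratio_test:
  assumes "finite E" and \<nu>: "solves_H Vmax E w lam \<nu>" and "\<forall>e\<in>C. 0 \<le> offset_lin Vmax lam e d"
    and slack: "\<forall>e\<in>E - C. 0 < offset Vmax w lam \<nu> e" and "\<exists>e\<in>E. offset_lin Vmax lam e d < 0"
  shows "\<exists>e'\<in>E - C. \<exists>t>0. offset_lin Vmax lam e' d < 0 \<and> tight w lam e' (\<lambda>u. \<nu> u + t * d u)
           \<and> solves_H Vmax E w lam (\<lambda>u. \<nu> u + t * d u)"
proof -
  define S where "S = {e \<in> E. offset_lin Vmax lam e d < 0}"
  define r where "r e = offset Vmax w lam \<nu> e / - offset_lin Vmax lam e d" for e
  have "finite S" and "S \<noteq> {}" and SC: "S \<subseteq> E - C"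
    using assms(1,3,5) by (auto simp: S_def)
  then obtain e' where e': "e' \<in> S" and min: "\<And>e. e \<in> S \<Longrightarrow> r e' \<le> r e"
    using arg_min_if_finite[of S r] by (meson not_less)
  define t where "t = r e'"
  have e'd: "offset_lin Vmax lam e' d < 0"
    using e' by (simp add: S_def)
  have "0 < t"
    using slack SC e' e'd by (auto simp: t_def r_def intro: divide_pos_neg)
  moreover have "tight w lam e' (\<lambda>u. \<nu> u + t * d u)"
    using e'd unfolding tight_iff_offset_eq_0[where Vmax = Vmax] offset_add_scaled
    by (simp add: t_def r_def)
  moreover have "solves_H Vmax E w lam (\<lambda>u. \<nu> u + t * d u)"
    unfolding solves_H_iff_offset_nonneg offset_add_scaled
  proof
    fix e assume "e \<in> E"
    show "0 \<le> offset Vmax w lam \<nu> e + t * offset_lin Vmax lam e d"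
    proof (cases "e \<in> S")
      case True
      then have "t \<le> r e" and "0 < - offset_lin Vmax lam e d"
        using min by (auto simp: t_def S_def)
      then have "t * - offset_lin Vmax lam e d \<le> offset Vmax w lam \<nu> e"
        unfolding r_def using pos_le_divide_eq by blast
      then show ?thesis
        by simp
    next
      case False
      then show ?thesis
        using \<open>e \<in> E\<close> \<nu> \<open>0 < t\<close> by (simp add: S_def solves_H_iff_offset_nonneg)
    qed
  qed
  ultimately show ?thesis
    using e' e'd SC by blast
qed

lemma pivot_kernel_trivial:
  assumes basis: "is_basis E w lam B" and b: "b \<in> B"
    and e'_dir: "offset_lin Vmax lam e' (edge_dir Vmax lam B b) \<noteq> 0"
    and z: "\<forall>c\<in>insert e' (B - {b}). offset_lin Vmax lam c z = 0"
  shows "z = (\<lambda>_. 0)"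
proof -
  define s where "s = offset_lin Vmax lam b z"
  have "z = (\<lambda>i. \<Sum>c\<in>B. offset_lin Vmax lam c z * edge_dir Vmax lam B c i)"
    by (rule basis_decomp[OF basis])
  also have "\<dots> = (\<lambda>i. s * edge_dir Vmax lam B b i)"
  proof
    fix i
    have "(\<Sum>c\<in>B - {b}. offset_lin Vmax lam c z * edge_dir Vmax lam B c i) = 0"
      using z by (intro sum.neutral) simp
    then show "(\<Sum>c\<in>B. offset_lin Vmax lam c z * edge_dir Vmax lam B c i) = s * edge_dir Vmax lam B b i"
      by (simp add: sum.remove[OF finite b] s_def)
  qed
  finally have zb: "z = (\<lambda>i. s * edge_dir Vmax lam B b i)" .
  then have "offset_lin Vmax lam e' z = s * offset_lin Vmax lam e' (edge_dir Vmax lam B b)"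
    by (simp add: offset_lin_scale)
  with z e'_dir have "s = 0"
    by simp
  with zb show ?thesis
    by simp
qed

lemma pivot_is_basis:
  assumes basis: "is_basis E w lam B" and b: "b \<in> B" and e': "e' \<in> E - B"
    and e'_dir: "offset_lin Vmax lam e' (edge_dir Vmax lam B b) \<noteq> 0"
    and y: "\<forall>c\<in>insert e' (B - {b}). tight w lam c y"
  shows "is_basis E w lam (insert e' (B - {b})) \<and> basis_sol w lam (insert e' (B - {b})) = y"
proof -
  let ?B' = "insert e' (B - {b})"
  have unique: "x = y" if "\<forall>c\<in>?B'. tight w lam c x" for x
  proof -
    have "\<forall>c\<in>?B'. offset_lin Vmax lam c (\<lambda>u. x u - y u) = 0"
      using that y by (simp add: offset_lin_diff_offset[where w = w] tight_iff_offset_eq_0[where Vmax = Vmax])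
    from pivot_kernel_trivial[OF basis b e'_dir this] show ?thesis
      by (simp add: fun_eq_iff)
  qed
  have "card ?B' = Suc (card (B - {b}))"
    using e' by simp
  also have "\<dots> = card B"
    by (rule card_Suc_Diff1[OF finite b])
  finally have "card ?B' = CARD('a)"
    using basis by (simp add: is_basis_def)
  moreover have "?B' \<subseteq> E"
    using basis e' by (auto simp: is_basis_def)
  moreover have "\<exists>!x. \<forall>c\<in>?B'. tight w lam c x"
    using y unique by (rule ex1I)
  ultimately have "is_basis E w lam ?B'"
    by (simp add: is_basis_def)
  with basis_sol_unique[OF this y] show ?thesis
    by simp
qed

lemma pivot_along_descent_edge:
  assumes sharp: "sharp Vmax E w lam" and \<sigma>: "joint_strategy E \<sigma>" and nonneg: "\<forall>e\<in>E. 0 \<le> \<alpha> e"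
    and \<nu>: "is_basis_valuation_of Vmax E w lam B \<nu>" and b: "b \<in> B"
    and descent: "f_adj_lin Vmax lam \<alpha> \<sigma> (edge_dir Vmax lam B b) < 0"
  shows "\<exists>e'\<in>E - B. \<exists>\<nu>'. is_basis_valuation_of Vmax E w lam (insert e' (B - {b})) \<nu>'
           \<and> f_adj Vmax w lam \<alpha> \<sigma> \<nu>' < f_adj Vmax w lam \<alpha> \<sigma> \<nu>"
proof -
  let ?d = "edge_dir Vmax lam B b"
  have basis: "is_basis E w lam B" and feasible: "solves_H Vmax E w lam \<nu>"
    and tight: "\<forall>c\<in>B. tight w lam c \<nu>"
    using \<nu> basis_sol_tight by (auto simp: is_basis_valuation_of_def)
  have dir_B: "offset_lin Vmax lam c ?d = (if c = b then 1 else 0)" if "c \<in> B" for c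
    by (rule offset_lin_edge_dir[OF basis that])
  have "\<forall>e\<in>E - B. 0 < offset Vmax w lam \<nu> e"
    using sharp_slack_off_basis[OF sharp \<nu>] by blast
  moreover have "\<forall>c\<in>B. 0 \<le> offset_lin Vmax lam c ?d"
    using dir_B by simp
  ultimately obtain e' t where e': "e' \<in> E - B" and "0 < t" and e'_dir: "offset_lin Vmax lam e' ?d < 0"
    and "tight w lam e' (\<lambda>u. \<nu> u + t * ?d u)" and feasible': "solves_H Vmax E w lam (\<lambda>u. \<nu> u + t * ?d u)"
    using ratio_test[OF finite feasible _ _ descent_direction_blocked[OF \<sigma> nonneg feasible descent]]
    by blast
  moreover have "tight w lam c (\<lambda>u. \<nu> u + t * ?d u)" if "c \<in> B - {b}" for c
    using tight that dir_B[of c]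
    by (simp add: tight_iff_offset_eq_0[where Vmax = Vmax] offset_add_scaled)
  ultimately have "\<forall>c\<in>insert e' (B - {b}). tight w lam c (\<lambda>u. \<nu> u + t * ?d u)"
    by blast
  then have "is_basis E w lam (insert e' (B - {b}))
      \<and> basis_sol w lam (insert e' (B - {b})) = (\<lambda>u. \<nu> u + t * ?d u)"
    by (rule pivot_is_basis[OF basis b e' less_imp_neq[OF e'_dir]])
  with feasible' have "is_basis_valuation_of Vmax E w lam (insert e' (B - {b})) (\<lambda>u. \<nu> u + t * ?d u)"
    by (simp add: is_basis_valuation_of_def)
  moreover have "f_adj Vmax w lam \<alpha> \<sigma> (\<lambda>u. \<nu> u + t * ?d u) < f_adj Vmax w lam \<alpha> \<sigma> \<nu>"
    using \<open>0 < t\<close> descent by (simp add: f_adj_add_scaled mult_pos_neg)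
  ultimately show ?thesis
    using e' by blast
qed

theorem sharp_improving_if_nonneg_factors:
  assumes sharp: "sharp Vmax E w lam" and nonneg: "\<forall>e\<in>E. 0 \<le> \<alpha> e"
  shows "improving Vmax E w lam \<alpha>"
  unfolding improving_def
proof (intro conjI allI impI sharp)
  fix \<sigma> B \<nu>
  assume \<sigma>: "joint_strategy E \<sigma>" and \<nu>: "is_basis_valuation_of Vmax E w lam B \<nu>"
    and "\<exists>x. solves_H Vmax E w lam x \<and> f_adj Vmax w lam \<alpha> \<sigma> x < f_adj Vmax w lam \<alpha> \<sigma> \<nu>"
  moreover have "is_basis E w lam B" and "\<forall>c\<in>B. tight w lam c \<nu>"
    using \<nu> basis_sol_tight by (auto simp: is_basis_valuation_of_def)
  ultimately obtain b where "b \<in> B" and "f_adj_lin Vmax lam \<alpha> \<sigma> (edge_dir Vmax lam B b) < 0"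
    using exists_descent_edge by blast
  then show "\<exists>e\<in>B. \<exists>e'\<in>E - B. \<exists>\<nu>'. is_basis_valuation_of Vmax E w lam (insert e' (B - {e})) \<nu>'
      \<and> f_adj Vmax w lam \<alpha> \<sigma> \<nu>' < f_adj Vmax w lam \<alpha> \<sigma> \<nu>"
    using pivot_along_descent_edge[OF sharp \<sigma> nonneg \<nu>] by blast
qed

lemma AE_PiM_uniform_measure_in_interval:
  fixes a b :: real
  assumes "finite I" and "a < b"
  shows "AE \<alpha> in PiM I (\<lambda>_. uniform_measure lborel {a..b}). \<forall>i\<in>I. \<alpha> i \<in> {a..b}"
proof -
  let ?M = "uniform_measure lborel {a..b}"
  have "prob_space ?M"
    using assms(2) by (intro prob_space_uniform_measure) auto
  moreover have "AE x in ?M. x \<in> {a..b}"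
    by (intro AE_uniform_measureI) auto
  ultimately have "\<forall>i\<in>I. AE \<alpha> in PiM I (\<lambda>_. ?M). \<alpha> i \<in> {a..b}"
    using AE_PiM_component[of I "\<lambda>_. ?M"] by blast
  then show ?thesis
    by (rule eventually_ball_finite[OF assms(1)])
qed

theorem theorem4p9:
  fixes Vmin Vmax :: "'v::finite set" and E :: "('v \<times> 'v) set"
    and w lam :: "'v \<times> 'v \<Rightarrow> real" and a b :: real
  assumes "Vmin \<inter> Vmax = {}" and "Vmin \<union> Vmax = UNIV"
    and "\<forall>v. \<exists>v'. (v, v') \<in> E"
    and "\<forall>e\<in>E. 0 \<le> lam e \<and> lam e < 1"
    and "sharp Vmax E w lam"
    and "0 < a" and "a < b"
  shows "AE \<alpha> in PiM E (\<lambda>_. uniform_measure lborel {a..b}). improving Vmax E w lam \<alpha>"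
  using AE_PiM_uniform_measure_in_interval[OF finite \<open>a < b\<close>]
proof (rule eventually_mono)
  fix \<alpha> assume "\<forall>e\<in>E. \<alpha> e \<in> {a..b}"
  with \<open>0 < a\<close> have "\<forall>e\<in>E. 0 \<le> \<alpha> e"
    by force
  then show "improving Vmax E w lam \<alpha>"
    by (rule sharp_improving_if_nonneg_factors[OF \<open>sharp Vmax E w lam\<close>])
qed

end
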